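(* Let $Y_1,\dots,Y_k\in\{0,1\}$ be independent unbiased Bernoulli random variables (each equal to $1$ with probability $1/2$), let $a_1,\dots,a_k\geq 0$ be reals, and let $X=\sum_{i=1}^k a_iY_i$ with mean $\mu=\mathbb{E}[X]$ and standard deviation $\sigma=\sqrt{\mathrm{Var}(X)}$. Then for every $c\in[0,1]$, $$\Pr(X\geq\mu+c\sigma)\geq\frac{(1-c)^2}{4}.$$ *)

theory Defs
  imports "HOL-Probability.Probability"
begin

end

(*
  Write X = m + Z, where m = (a_1 + ... + a_k) / 2 and Z = sum_i (a_i / 2) eps_i is a Rademacher
  sum (eps_i = 2 Y_i - 1), so that everything becomes an average over the discrete cube of subsets
  of {1..k}.  Then mu = m, sigma^2 = sum_i (a_i / 2)^2, Z is symmetric, and E Z^4 <= 3 sigma^4.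
  Let q = Pr(Z >= c sigma).

  For c >= 0.23, the Paley-Zygmund argument for Z^2 gives (1 - c^2)^2 <= 6 q, and
  (1 - c^2)^2 / 6 >= (1 - c)^2 / 4 as soon as (1 + c)^2 >= 3/2.

  For small c the first moment is used instead.  Szarek's inequality E|Z| >= sigma / sqrt 2 (the
  Khintchine inequality with optimal constant) follows from 2 Var f <= I[f] + W^1[f] applied to
  f = |Z|.  Splitting E[Z; Z > 0] = E|Z| / 2 at c sigma, with Cauchy-Schwarz on the upper part,
  gives 1 / sqrt 2 <= w + c (1 - w^2) for w = sqrt (2 q), which forces w >= (1 - c) / sqrt 2.
*)

theory Submission
  imports Defs
begin

section \<open>Averages over the discrete cube\<close>

text \<open>A subset \<open>S\<close> of \<open>F\<close> encodes the outcome in which exactly the coordinates in \<open>S\<close> are 1,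
  so \<open>cube_avg F\<close> is the expectation with respect to independent fair coins indexed by \<open>F\<close>.\<close>

definition cube_avg :: "nat set \<Rightarrow> (nat set \<Rightarrow> real) \<Rightarrow> real" where
  "cube_avg F f = (\<Sum>S\<in>Pow F. f S) / 2 ^ card F"

lemma cube_avg_empty [simp]: "cube_avg {} f = f {}"
  unfolding cube_avg_def by simp

lemma cube_avg_insert:
  assumes "finite F" "i \<notin> F"
  shows "cube_avg (insert i F) f = (cube_avg F (\<lambda>S. f (insert i S)) + cube_avg F f) / 2"
proof -
  have "inj_on (insert i) (Pow F)"
    using assms(2) by (auto simp: inj_on_def)
  then have "(\<Sum>S\<in>Pow (insert i F). f S) = (\<Sum>S\<in>Pow F. f S) + (\<Sum>S\<in>Pow F. f (insert i S))"
    unfolding Pow_insert using assms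
    by (subst sum.union_disjoint) (auto simp: sum.reindex)
  then show ?thesis
    using assms unfolding cube_avg_def by (simp add: field_simps)
qed

lemma cube_avg_cong: "(\<And>S. S \<subseteq> F \<Longrightarrow> f S = g S) \<Longrightarrow> cube_avg F f = cube_avg F g"
  unfolding cube_avg_def by (auto intro: sum.cong)

lemma cube_avg_add: "cube_avg F (\<lambda>S. f S + g S) = cube_avg F f + cube_avg F g"
  unfolding cube_avg_def by (simp add: sum.distrib add_divide_distrib)

lemma cube_avg_diff: "cube_avg F (\<lambda>S. f S - g S) = cube_avg F f - cube_avg F g"
  unfolding cube_avg_def by (simp add: sum_subtractf diff_divide_distrib)

lemma cube_avg_cmult: "cube_avg F (\<lambda>S. c * f S) = c * cube_avg F f"
  unfolding cube_avg_def by (simp add: sum_distrib_left)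

lemma cube_avg_uminus: "cube_avg F (\<lambda>S. - f S) = - cube_avg F f"
  using cube_avg_cmult[of F "-1" f] by simp

lemma cube_avg_divide: "cube_avg F (\<lambda>S. f S / c) = cube_avg F f / c"
  unfolding cube_avg_def sum_divide_distrib[symmetric] by simp

lemma cube_avg_const: "finite F \<Longrightarrow> cube_avg F (\<lambda>S. c) = c"
  unfolding cube_avg_def by (simp add: card_Pow)

lemma cube_avg_mono: "(\<And>S. S \<subseteq> F \<Longrightarrow> f S \<le> g S) \<Longrightarrow> cube_avg F f \<le> cube_avg F g"
  unfolding cube_avg_def by (intro divide_right_mono sum_mono) auto

lemma cube_avg_nonneg: "(\<And>S. S \<subseteq> F \<Longrightarrow> 0 \<le> f S) \<Longrightarrow> 0 \<le> cube_avg F f"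
  using cube_avg_mono[of F "\<lambda>_. 0" f] unfolding cube_avg_def by simp

lemma cube_avg_Cauchy_Schwarz:
  "(cube_avg F (\<lambda>S. f S * g S))\<^sup>2 \<le> cube_avg F (\<lambda>S. (f S)\<^sup>2) * cube_avg F (\<lambda>S. (g S)\<^sup>2)"
  using divide_right_mono[OF Cauchy_Schwarz_ineq_sum[of f g "Pow F"], of "(2 ^ card F)\<^sup>2"]
  unfolding cube_avg_def by (simp add: power_divide power2_eq_square)

lemma cube_avg_compl: "finite F \<Longrightarrow> cube_avg F (\<lambda>S. f (F - S)) = cube_avg F f"
  unfolding cube_avg_def
  by (subst sum.reindex_bij_witness[where i="\<lambda>S. F - S" and j="\<lambda>S. F - S"]) (auto simp: double_diff)

section \<open>Influences\<close>

definition walsh :: "nat \<Rightarrow> nat set \<Rightarrow> real" where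
  "walsh j S = (if j \<in> S then 1 else -1)"

definition flip :: "nat \<Rightarrow> nat set \<Rightarrow> nat set" where
  "flip j S = (if j \<in> S then S - {j} else insert j S)"

definition coord_mean :: "nat \<Rightarrow> (nat set \<Rightarrow> real) \<Rightarrow> nat set \<Rightarrow> real" where
  "coord_mean i f S = (f (insert i S) + f S) / 2"

definition coord_diff :: "nat \<Rightarrow> (nat set \<Rightarrow> real) \<Rightarrow> nat set \<Rightarrow> real" where
  "coord_diff i f S = (f (insert i S) - f S) / 2"

definition cube_var :: "nat set \<Rightarrow> (nat set \<Rightarrow> real) \<Rightarrow> real" where
  "cube_var F f = cube_avg F (\<lambda>S. (f S)\<^sup>2) - (cube_avg F f)\<^sup>2"

text \<open>In O'Donnell's notation, \<open>energy F f\<close> is the total influence \<open>I[f]\<close> and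
  \<open>level1_weight F f\<close> is the Fourier weight \<open>W\<^sup>1[f]\<close> at level one.\<close>

definition energy :: "nat set \<Rightarrow> (nat set \<Rightarrow> real) \<Rightarrow> real" where
  "energy F f = (\<Sum>j\<in>F. cube_avg F (\<lambda>S. ((f S - f (flip j S)) / 2)\<^sup>2))"

definition level1_weight :: "nat set \<Rightarrow> (nat set \<Rightarrow> real) \<Rightarrow> real" where
  "level1_weight F f = (\<Sum>j\<in>F. (cube_avg F (\<lambda>S. f S * walsh j S))\<^sup>2)"

lemma energy_nonneg: "0 \<le> energy F f"
  unfolding energy_def by (intro sum_nonneg cube_avg_nonneg) auto

context
  fixes F :: "nat set" and i :: nat
  assumes F: "finite F" "i \<notin> F"
begin

lemma cube_avg_insert_coord_mean: "cube_avg (insert i F) f = cube_avg F (coord_mean i f)"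
  unfolding coord_mean_def cube_avg_divide cube_avg_add cube_avg_insert[OF F] ..

lemma cube_var_insert:
  "cube_var (insert i F) f = cube_var F (coord_mean i f) + cube_avg F (\<lambda>S. (coord_diff i f S)\<^sup>2)"
proof -
  have "cube_avg (insert i F) (\<lambda>S. (f S)\<^sup>2)
      = cube_avg F (\<lambda>S. (coord_mean i f S)\<^sup>2 + (coord_diff i f S)\<^sup>2)"
    unfolding cube_avg_insert_coord_mean coord_mean_def coord_diff_def
    by (intro cube_avg_cong) (simp add: power2_eq_square field_simps)
  then show ?thesis
    unfolding cube_var_def cube_avg_add cube_avg_insert_coord_mean by simp
qed

lemma energy_insert:
  "energy (insert i F) f
     = energy F (coord_mean i f) + energy F (coord_diff i f) + cube_avg F (\<lambda>S. (coord_diff i f S)\<^sup>2)"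
proof -
  have new_coord: "cube_avg (insert i F) (\<lambda>S. ((f S - f (flip i S)) / 2)\<^sup>2)
      = cube_avg F (\<lambda>S. (coord_diff i f S)\<^sup>2)"
    unfolding cube_avg_insert_coord_mean coord_mean_def coord_diff_def
  proof (intro cube_avg_cong)
    fix S assume "S \<subseteq> F"
    then have "flip i (insert i S) = S" "flip i S = insert i S"
      using F by (auto simp: flip_def)
    then show "(((f (insert i S) - f (flip i (insert i S))) / 2)\<^sup>2
        + ((f S - f (flip i S)) / 2)\<^sup>2) / 2 = ((f (insert i S) - f S) / 2)\<^sup>2"
      by (simp add: power2_eq_square field_simps)
  qed
  have old_coord: "cube_avg (insert i F) (\<lambda>S. ((f S - f (flip j S)) / 2)\<^sup>2)
      = cube_avg F (\<lambda>S. ((coord_mean i f S - coord_mean i f (flip j S)) / 2)\<^sup>2)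
        + cube_avg F (\<lambda>S. ((coord_diff i f S - coord_diff i f (flip j S)) / 2)\<^sup>2)"
    if "j \<in> F" for j
  proof -
    have "flip j (insert i S) = insert i (flip j S)" for S
      using that F by (auto simp: flip_def)
    then show ?thesis
      unfolding cube_avg_insert_coord_mean cube_avg_add[symmetric] coord_mean_def coord_diff_def
      by (intro cube_avg_cong) (simp add: power2_eq_square field_simps)
  qed
  show ?thesis
    unfolding energy_def using F new_coord old_coord by (simp add: sum.distrib)
qed

lemma level1_weight_insert:
  "level1_weight (insert i F) f = level1_weight F (coord_mean i f) + (cube_avg F (coord_diff i f))\<^sup>2"
proof -
  have new_coord: "cube_avg (insert i F) (\<lambda>S. f S * walsh i S) = cube_avg F (coord_diff i f)"
    unfolding cube_avg_insert_coord_mean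
    using F by (intro cube_avg_cong) (auto simp: walsh_def coord_mean_def coord_diff_def)
  have old_coord: "cube_avg (insert i F) (\<lambda>S. f S * walsh j S)
      = cube_avg F (\<lambda>S. coord_mean i f S * walsh j S)" if "j \<in> F" for j
  proof -
    have "walsh j (insert i S) = walsh j S" for S
      using that F by (auto simp: walsh_def)
    then show ?thesis
      unfolding cube_avg_insert_coord_mean coord_mean_def by (simp add: add_divide_distrib distrib_right)
  qed
  show ?thesis
    unfolding level1_weight_def using F new_coord old_coord by simp
qed

end

lemma cube_var_le_energy: "finite F \<Longrightarrow> cube_var F f \<le> energy F f"
proof (induction F arbitrary: f rule: finite_induct)
  case (insert i F)
  show ?case
    using insert.IH[of "coord_mean i f"] energy_nonneg[of F "coord_diff i f"]
    unfolding cube_var_insert[OF insert.hyps] energy_insert[OF insert.hyps] by linarith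
qed (simp add: cube_var_def energy_def)

text \<open>Fourier-analytically this is \<open>I[f] = \<Sum>\<^sub>k k W\<^sup>k[f] \<ge> 2 Var f - W\<^sup>1[f]\<close>.\<close>

lemma two_cube_var_le_energy_level1_weight:
  "finite F \<Longrightarrow> 2 * cube_var F f \<le> energy F f + level1_weight F f"
proof (induction F arbitrary: f rule: finite_induct)
  case (insert i F)
  show ?case
    using insert.IH[of "coord_mean i f"] cube_var_le_energy[OF insert(1), of "coord_diff i f"]
      cube_var_def[of F "coord_diff i f"]
    unfolding cube_var_insert[OF insert.hyps] energy_insert[OF insert.hyps]
      level1_weight_insert[OF insert.hyps] by argo
qed (simp add: cube_var_def energy_def level1_weight_def)

lemma level1_weight_compl_invariant:
  assumes "finite F" and compl: "\<And>S. S \<subseteq> F \<Longrightarrow> f (F - S) = f S"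
  shows "level1_weight F f = 0"
proof -
  have "cube_avg F (\<lambda>S. f S * walsh j S) = 0" if "j \<in> F" for j
  proof -
    have "cube_avg F (\<lambda>S. f S * walsh j S) = cube_avg F (\<lambda>S. f (F - S) * walsh j (F - S))"
      using cube_avg_compl[OF \<open>finite F\<close>, of "\<lambda>S. f S * walsh j S"] by simp
    also have "\<dots> = - cube_avg F (\<lambda>S. f S * walsh j S)"
      unfolding cube_avg_uminus[symmetric]
      using that compl by (intro cube_avg_cong) (auto simp: walsh_def)
    finally show ?thesis by simp
  qed
  then show ?thesis
    unfolding level1_weight_def by simp
qed

section \<open>Rademacher sums and Szarek's inequality\<close>

definition rademacher_sum :: "(nat \<Rightarrow> real) \<Rightarrow> nat set \<Rightarrow> nat set \<Rightarrow> real" where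
  "rademacher_sum b F S = (\<Sum>j\<in>F. b j * walsh j S)"

lemma cube_avg_rademacher_sum_insert:
  assumes "finite F" "i \<notin> F"
  shows "cube_avg (insert i F) (\<lambda>S. g (rademacher_sum b (insert i F) S))
    = (cube_avg F (\<lambda>S. g (rademacher_sum b F S + b i))
        + cube_avg F (\<lambda>S. g (rademacher_sum b F S - b i))) / 2"
proof -
  have "rademacher_sum b (insert i F) (insert i S) = rademacher_sum b F S + b i"
    and "rademacher_sum b (insert i F) S = rademacher_sum b F S - b i" if "S \<subseteq> F" for S
  proof -
    have "(\<Sum>j\<in>F. b j * walsh j (insert i S)) = (\<Sum>j\<in>F. b j * walsh j S)"
      using assms by (intro sum.cong) (auto simp: walsh_def)
    then show "rademacher_sum b (insert i F) (insert i S) = rademacher_sum b F S + b i"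
      using assms unfolding rademacher_sum_def by (simp add: walsh_def)
    show "rademacher_sum b (insert i F) S = rademacher_sum b F S - b i"
      using assms that unfolding rademacher_sum_def by (auto simp: walsh_def)
  qed
  then show ?thesis
    unfolding cube_avg_insert[OF assms] by (simp cong: cube_avg_cong)
qed

lemma cube_avg_rademacher_sum_square:
  "finite F \<Longrightarrow> cube_avg F (\<lambda>S. (rademacher_sum b F S)\<^sup>2) = (\<Sum>j\<in>F. (b j)\<^sup>2)"
proof (induction F rule: finite_induct)
  case (insert i F)
  have "cube_avg (insert i F) (\<lambda>S. (rademacher_sum b (insert i F) S)\<^sup>2)
      = cube_avg F (\<lambda>S. (rademacher_sum b F S)\<^sup>2 + (b i)\<^sup>2)"
    unfolding cube_avg_rademacher_sum_insert[OF insert.hyps, of "\<lambda>z. z\<^sup>2"]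
      cube_avg_add[symmetric] cube_avg_divide[symmetric]
    by (intro cube_avg_cong) (simp add: power2_eq_square field_simps)
  with insert show ?case
    by (simp add: cube_avg_add cube_avg_const)
qed (simp add: rademacher_sum_def)

lemma cube_avg_rademacher_sum_fourth:
  "finite F \<Longrightarrow> cube_avg F (\<lambda>S. (rademacher_sum b F S) ^ 4) \<le> 3 * (\<Sum>j\<in>F. (b j)\<^sup>2)\<^sup>2"
proof (induction F rule: finite_induct)
  case (insert i F)
  let ?v = "\<Sum>j\<in>F. (b j)\<^sup>2"
  have "cube_avg (insert i F) (\<lambda>S. (rademacher_sum b (insert i F) S) ^ 4)
      = cube_avg F (\<lambda>S. (rademacher_sum b F S) ^ 4 + 6 * (b i)\<^sup>2 * (rademacher_sum b F S)\<^sup>2 + (b i) ^ 4)"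
    unfolding cube_avg_rademacher_sum_insert[OF insert.hyps, of "\<lambda>z. z ^ 4"]
      cube_avg_add[symmetric] cube_avg_divide[symmetric]
    by (intro cube_avg_cong) (simp add: power2_eq_square power4_eq_xxxx field_simps)
  also have "\<dots> = cube_avg F (\<lambda>S. (rademacher_sum b F S) ^ 4) + 6 * (b i)\<^sup>2 * ?v + (b i) ^ 4"
    using insert.hyps
    by (simp add: cube_avg_add cube_avg_const cube_avg_cmult cube_avg_rademacher_sum_square mult.assoc)
  also have "\<dots> \<le> 3 * ?v\<^sup>2 + 6 * (b i)\<^sup>2 * ?v + 3 * (b i) ^ 4"
  proof -
    have "0 \<le> (b i) ^ 4" by simp
    then show ?thesis using insert.IH by linarith
  qed
  also have "\<dots> = 3 * (\<Sum>j\<in>insert i F. (b j)\<^sup>2)\<^sup>2"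
    using insert.hyps by (simp add: power2_eq_square power4_eq_xxxx algebra_simps)
  finally show ?case .
qed (simp add: rademacher_sum_def)

lemma rademacher_sum_compl: "S \<subseteq> F \<Longrightarrow> rademacher_sum b F (F - S) = - rademacher_sum b F S"
  unfolding rademacher_sum_def sum_negf[symmetric]
  by (intro sum.cong) (auto simp: walsh_def)

lemma rademacher_sum_flip:
  assumes "finite F" "j \<in> F"
  shows "rademacher_sum b F (flip j S) = rademacher_sum b F S - 2 * b j * walsh j S"
proof -
  have "(\<Sum>i\<in>F - {j}. b i * walsh i (flip j S)) = (\<Sum>i\<in>F - {j}. b i * walsh i S)"
    by (intro sum.cong) (auto simp: walsh_def flip_def)
  then show ?thesis
    using assms unfolding rademacher_sum_def by (simp add: sum.remove walsh_def flip_def)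
qed

lemma energy_abs_rademacher_sum_le:
  assumes "finite F"
  shows "energy F (\<lambda>S. \<bar>rademacher_sum b F S\<bar>) \<le> (\<Sum>j\<in>F. (b j)\<^sup>2)"
  unfolding energy_def
proof (intro sum_mono)
  fix j assume "j \<in> F"
  have "((\<bar>rademacher_sum b F S\<bar> - \<bar>rademacher_sum b F (flip j S)\<bar>) / 2)\<^sup>2 \<le> (b j)\<^sup>2" for S
  proof -
    have "\<bar>\<bar>rademacher_sum b F S\<bar> - \<bar>rademacher_sum b F (flip j S)\<bar>\<bar>
        \<le> \<bar>rademacher_sum b F S - rademacher_sum b F (flip j S)\<bar>"
      by (rule abs_triangle_ineq3)
    also have "\<dots> = 2 * \<bar>b j\<bar>"
      using rademacher_sum_flip[OF assms \<open>j \<in> F\<close>] by (simp add: walsh_def abs_mult)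
    finally have "\<bar>(\<bar>rademacher_sum b F S\<bar> - \<bar>rademacher_sum b F (flip j S)\<bar>) / 2\<bar> \<le> \<bar>b j\<bar>"
      by simp
    then show ?thesis
      by (simp only: abs_le_square_iff)
  qed
  then have "cube_avg F (\<lambda>S. ((\<bar>rademacher_sum b F S\<bar> - \<bar>rademacher_sum b F (flip j S)\<bar>) / 2)\<^sup>2)
      \<le> cube_avg F (\<lambda>_. (b j)\<^sup>2)"
    by (intro cube_avg_mono)
  then show "cube_avg F (\<lambda>S. ((\<bar>rademacher_sum b F S\<bar> - \<bar>rademacher_sum b F (flip j S)\<bar>) / 2)\<^sup>2)
      \<le> (b j)\<^sup>2"
    by (simp only: cube_avg_const[OF assms])
qed

theorem Szarek_inequality:
  assumes "finite F"
  shows "(\<Sum>j\<in>F. (b j)\<^sup>2) \<le> 2 * (cube_avg F (\<lambda>S. \<bar>rademacher_sum b F S\<bar>))\<^sup>2"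
proof -
  let ?f = "\<lambda>S. \<bar>rademacher_sum b F S\<bar>"
  have "level1_weight F ?f = 0"
    using assms by (intro level1_weight_compl_invariant) (auto simp: rademacher_sum_compl)
  moreover have "cube_var F ?f = (\<Sum>j\<in>F. (b j)\<^sup>2) - (cube_avg F ?f)\<^sup>2"
    unfolding cube_var_def using cube_avg_rademacher_sum_square[OF assms] by simp
  ultimately show ?thesis
    using two_cube_var_le_energy_level1_weight[OF assms, of ?f]
      energy_abs_rademacher_sum_le[OF assms, of b] by simp
qed

section \<open>Tail bounds for odd functions on the cube\<close>

lemma one_minus_square_quarter_le_sixth:
  fixes c :: real
  assumes "23 / 100 \<le> c" "c \<le> 1"
  shows "(1 - c)\<^sup>2 / 4 \<le> (1 - c\<^sup>2)\<^sup>2 / 6"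
proof -
  have "(123 / 100) * (123 / 100) \<le> (1 + c) * (1 + c)"
    using assms by (intro mult_mono) auto
  then have "(1 - c)\<^sup>2 * (3 / 2) \<le> (1 - c)\<^sup>2 * (1 + c)\<^sup>2"
    by (intro mult_left_mono) (auto simp: power2_eq_square)
  also have "\<dots> = (1 - c\<^sup>2)\<^sup>2"
    by (simp add: power2_eq_square algebra_simps)
  finally show ?thesis
    by simp
qed

text \<open>The map \<open>w \<mapsto> w + c (1 - w\<^sup>2)\<close> is increasing on \<open>[0, 1 / (2 c)]\<close>, which contains
  both \<open>w\<close> and \<open>(1 - c) \<surd>2 / 2\<close> when \<open>c \<le> 23 / 100\<close>.\<close>

lemma quadratic_threshold_small_slope:
  fixes c w :: real
  assumes c: "0 < c" "c \<le> 23 / 100" and "0 \<le> w"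
    and bound: "sqrt 2 / 2 \<le> w + c * (1 - w\<^sup>2)"
  shows "(1 - c) * sqrt 2 / 2 \<le> w"
proof (rule ccontr)
  define w\<^sub>0 where "w\<^sub>0 = (1 - c) * sqrt 2 / 2"
  have w\<^sub>0_square: "w\<^sub>0\<^sup>2 = (1 - c)\<^sup>2 / 2"
    unfolding w\<^sub>0_def by (simp add: power_mult_distrib power_divide)
  assume "\<not> ?thesis"
  then have "w < w\<^sub>0"
    unfolding w\<^sub>0_def by simp
  have "sqrt 2 \<le> 2"
    by (rule real_sqrt_le_iff[of 2 4, simplified])
  then have "w\<^sub>0 \<le> 1"
    using c mult_mono[of "1 - c" 1 "sqrt 2" 2] unfolding w\<^sub>0_def by simp
  then have "c * (w\<^sub>0 + w) < 1"
    using c \<open>0 \<le> w\<close> \<open>w < w\<^sub>0\<close> mult_mono[of c "23 / 100" "w\<^sub>0 + w" 2] by simp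
  then have "0 < (w\<^sub>0 - w) * (1 - c * (w\<^sub>0 + w))"
    using \<open>w < w\<^sub>0\<close> by simp
  then have "w + c * (1 - w\<^sup>2) < w\<^sub>0 + c * (1 - w\<^sub>0\<^sup>2)"
    by (simp add: power2_eq_square algebra_simps)
  also have "\<dots> = (1 - c) * sqrt 2 / 2 + c - c * (1 - c)\<^sup>2 / 2"
    by (simp only: w\<^sub>0_square) (simp add: w\<^sub>0_def algebra_simps)
  finally have "c * (sqrt 2 / 2 + (1 - c)\<^sup>2 / 2) < c * 1"
    using bound by (simp add: algebra_simps) argo
  then have "sqrt 2 / 2 + (1 - c)\<^sup>2 / 2 < 1"
    using c by simp
  moreover have "1414 / 1000 \<le> sqrt 2"
    by (rule real_le_rsqrt) (simp add: power2_eq_square)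
  moreover have "(77 / 100)\<^sup>2 \<le> (1 - c)\<^sup>2"
    using c by (intro power_mono) auto
  ultimately show False
    by (simp add: power2_eq_square)
qed

context
  fixes F :: "nat set" and Z :: "nat set \<Rightarrow> real"
  assumes F: "finite F" and odd: "\<And>S. S \<subseteq> F \<Longrightarrow> Z (F - S) = - Z S"
begin

lemma cube_avg_odd_symmetrize:
  "2 * cube_avg F (\<lambda>S. g (Z S)) = cube_avg F (\<lambda>S. g (Z S) + g (- Z S))"
proof -
  have "cube_avg F (\<lambda>S. g (Z S)) = cube_avg F (\<lambda>S. g (Z (F - S)))"
    using cube_avg_compl[OF F, of "\<lambda>S. g (Z S)"] by simp
  also have "\<dots> = cube_avg F (\<lambda>S. g (- Z S))"
    using odd by (intro cube_avg_cong) simp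
  finally show ?thesis
    by (simp add: cube_avg_add)
qed

lemma cube_avg_odd_eq_0: "cube_avg F Z = 0"
  using cube_avg_odd_symmetrize[of "\<lambda>z. z"] cube_avg_const[OF F, of 0] by simp

lemma cube_avg_odd_nonneg_ge_half: "1 / 2 \<le> cube_avg F (\<lambda>S. of_bool (0 \<le> Z S))"
proof -
  have "cube_avg F (\<lambda>S. 1) \<le> cube_avg F (\<lambda>S. of_bool (0 \<le> Z S) + of_bool (0 \<le> - Z S))"
    by (intro cube_avg_mono) auto
  then show ?thesis
    using cube_avg_odd_symmetrize[of "\<lambda>z. of_bool (0 \<le> z)"] cube_avg_const[OF F] by simp
qed

lemma cube_avg_odd_pos_le_half: "cube_avg F (\<lambda>S. of_bool (0 < Z S)) \<le> 1 / 2"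
proof -
  have "cube_avg F (\<lambda>S. of_bool (0 < Z S) + of_bool (0 < - Z S)) \<le> cube_avg F (\<lambda>S. 1)"
    by (intro cube_avg_mono) auto
  then show ?thesis
    using cube_avg_odd_symmetrize[of "\<lambda>z. of_bool (0 < z)"] cube_avg_const[OF F] by simp
qed

lemma cube_avg_odd_pos_part: "cube_avg F (\<lambda>S. Z S * of_bool (0 < Z S)) = cube_avg F (\<lambda>S. \<bar>Z S\<bar>) / 2"
proof -
  have "cube_avg F (\<lambda>S. Z S * of_bool (0 < Z S) + - Z S * of_bool (0 < - Z S))
      = cube_avg F (\<lambda>S. \<bar>Z S\<bar>)"
    by (intro cube_avg_cong) auto
  then show ?thesis
    using cube_avg_odd_symmetrize[of "\<lambda>z. z * of_bool (0 < z)"] by simp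
qed

lemma cube_avg_odd_pos_square_le:
  "cube_avg F (\<lambda>S. (Z S)\<^sup>2 * of_bool (0 < Z S)) \<le> cube_avg F (\<lambda>S. (Z S)\<^sup>2) / 2"
proof -
  have "cube_avg F (\<lambda>S. (Z S)\<^sup>2 * of_bool (0 < Z S) + (- Z S)\<^sup>2 * of_bool (0 < - Z S))
      \<le> cube_avg F (\<lambda>S. (Z S)\<^sup>2)"
    by (intro cube_avg_mono) auto
  then show ?thesis
    using cube_avg_odd_symmetrize[of "\<lambda>z. z\<^sup>2 * of_bool (0 < z)"] by simp
qed

lemma cube_avg_odd_square_tail_le:
  assumes "0 \<le> t"
  shows "cube_avg F (\<lambda>S. of_bool (t\<^sup>2 \<le> (Z S)\<^sup>2)) \<le> 2 * cube_avg F (\<lambda>S. of_bool (t \<le> Z S))"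
proof -
  have "of_bool (t\<^sup>2 \<le> z\<^sup>2) \<le> (of_bool (t \<le> z) + of_bool (t \<le> - z) :: real)" for z
    using assms abs_le_square_iff[of t z] by (cases "t\<^sup>2 \<le> z\<^sup>2") auto
  then have "cube_avg F (\<lambda>S. of_bool (t\<^sup>2 \<le> (Z S)\<^sup>2))
      \<le> cube_avg F (\<lambda>S. of_bool (t \<le> Z S) + of_bool (t \<le> - Z S))"
    by (intro cube_avg_mono) auto
  then show ?thesis
    using cube_avg_odd_symmetrize[of "\<lambda>z. of_bool (t \<le> z)"] by simp
qed

lemma odd_Paley_Zygmund:
  assumes "0 \<le> t" and "t\<^sup>2 \<le> cube_avg F (\<lambda>S. (Z S)\<^sup>2)"
  shows "(cube_avg F (\<lambda>S. (Z S)\<^sup>2) - t\<^sup>2)\<^sup>2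
    \<le> 2 * cube_avg F (\<lambda>S. (Z S) ^ 4) * cube_avg F (\<lambda>S. of_bool (t \<le> Z S))"
proof -
  define I where "I S = (of_bool (t\<^sup>2 \<le> (Z S)\<^sup>2) :: real)" for S
  have "cube_avg F (\<lambda>S. (Z S)\<^sup>2) \<le> cube_avg F (\<lambda>S. (Z S)\<^sup>2 * I S + t\<^sup>2)"
    unfolding I_def by (intro cube_avg_mono) auto
  then have "cube_avg F (\<lambda>S. (Z S)\<^sup>2) - t\<^sup>2 \<le> cube_avg F (\<lambda>S. (Z S)\<^sup>2 * I S)"
    by (simp add: cube_avg_add cube_avg_const[OF F])
  with assms(2) have "(cube_avg F (\<lambda>S. (Z S)\<^sup>2) - t\<^sup>2)\<^sup>2 \<le> (cube_avg F (\<lambda>S. (Z S)\<^sup>2 * I S))\<^sup>2"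
    by (intro power_mono) auto
  also have "\<dots> \<le> cube_avg F (\<lambda>S. ((Z S)\<^sup>2)\<^sup>2) * cube_avg F (\<lambda>S. (I S)\<^sup>2)"
    by (rule cube_avg_Cauchy_Schwarz)
  also have "\<dots> = cube_avg F (\<lambda>S. (Z S) ^ 4) * cube_avg F I"
    by (intro arg_cong2[where f = "(*)"] cube_avg_cong) (auto simp: I_def power_mult[symmetric])
  also have "\<dots> \<le> cube_avg F (\<lambda>S. (Z S) ^ 4) * (2 * cube_avg F (\<lambda>S. of_bool (t \<le> Z S)))"
    unfolding I_def using cube_avg_odd_square_tail_le[OF assms(1)]
    by (intro mult_left_mono cube_avg_nonneg) auto
  finally show ?thesis
    by simp
qed

lemma cube_avg_odd_upper_tail_le:
  assumes "0 \<le> t"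
  defines "q \<equiv> cube_avg F (\<lambda>S. of_bool (t \<le> Z S))"
  shows "cube_avg F (\<lambda>S. Z S * of_bool (t \<le> Z S)) \<le> sqrt (2 * cube_avg F (\<lambda>S. (Z S)\<^sup>2) * q) / 2"
proof -
  have "(cube_avg F (\<lambda>S. Z S * of_bool (t \<le> Z S)))\<^sup>2
      = (cube_avg F (\<lambda>S. (Z S * of_bool (t \<le> Z S)) * of_bool (t \<le> Z S)))\<^sup>2"
    by (intro arg_cong[where f = power2] cube_avg_cong) auto
  also have "\<dots> \<le> cube_avg F (\<lambda>S. (Z S * of_bool (t \<le> Z S))\<^sup>2)
      * cube_avg F (\<lambda>S. (of_bool (t \<le> Z S))\<^sup>2)"
    by (rule cube_avg_Cauchy_Schwarz)
  also have "cube_avg F (\<lambda>S. (of_bool (t \<le> Z S))\<^sup>2) = q"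
    unfolding q_def by (intro cube_avg_cong) auto
  also have "cube_avg F (\<lambda>S. (Z S * of_bool (t \<le> Z S))\<^sup>2) * q
      \<le> cube_avg F (\<lambda>S. (Z S)\<^sup>2) / 2 * q"
  proof (intro mult_right_mono)
    show "cube_avg F (\<lambda>S. (Z S * of_bool (t \<le> Z S))\<^sup>2) \<le> cube_avg F (\<lambda>S. (Z S)\<^sup>2) / 2"
      using assms(1) cube_avg_mono[of F "\<lambda>S. (Z S * of_bool (t \<le> Z S))\<^sup>2"
          "\<lambda>S. (Z S)\<^sup>2 * of_bool (0 < Z S)"] cube_avg_odd_pos_square_le
      by (force simp: power_mult_distrib)
    show "0 \<le> q"
      unfolding q_def by (intro cube_avg_nonneg) auto
  qed
  finally have "cube_avg F (\<lambda>S. Z S * of_bool (t \<le> Z S)) \<le> sqrt (cube_avg F (\<lambda>S. (Z S)\<^sup>2) / 2 * q)"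
    by (rule real_le_rsqrt)
  also have "\<dots> = sqrt (2 * cube_avg F (\<lambda>S. (Z S)\<^sup>2) * q) / 2"
    using real_sqrt_mult[of 4 "cube_avg F (\<lambda>S. (Z S)\<^sup>2) / 2 * q"] by (simp add: ac_simps)
  finally show ?thesis .
qed

lemma odd_mean_abs_le_tail:
  assumes "0 < t"
  defines "q \<equiv> cube_avg F (\<lambda>S. of_bool (t \<le> Z S))"
  shows "cube_avg F (\<lambda>S. \<bar>Z S\<bar>) \<le> sqrt (2 * cube_avg F (\<lambda>S. (Z S)\<^sup>2) * q) + t * (1 - 2 * q)"
proof -
  have "cube_avg F (\<lambda>S. Z S * of_bool (0 < Z S \<and> Z S < t))
      \<le> cube_avg F (\<lambda>S. t * (of_bool (0 < Z S) - of_bool (t \<le> Z S)))"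
    using assms(1) by (intro cube_avg_mono) auto
  also have "\<dots> \<le> t * (1 / 2 - q)"
    unfolding cube_avg_cmult cube_avg_diff q_def
    using cube_avg_odd_pos_le_half assms(1) by (intro mult_left_mono) auto
  moreover have "cube_avg F (\<lambda>S. \<bar>Z S\<bar>) / 2
      = cube_avg F (\<lambda>S. Z S * of_bool (t \<le> Z S)) + cube_avg F (\<lambda>S. Z S * of_bool (0 < Z S \<and> Z S < t))"
    unfolding cube_avg_odd_pos_part[symmetric] cube_avg_add[symmetric]
    using assms(1) by (intro cube_avg_cong) auto
  ultimately show ?thesis
    using cube_avg_odd_upper_tail_le[of t] assms(1) unfolding q_def by (simp add: algebra_simps)
qed

lemma odd_tail_ge_at_zero:
  assumes "0 \<le> c" "c \<le> 1"
  shows "(1 - c)\<^sup>2 / 4 \<le> cube_avg F (\<lambda>S. of_bool (0 \<le> Z S))"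
proof -
  have "(1 - c)\<^sup>2 \<le> 1"
    using assms by (intro power_le_one) auto
  then show ?thesis
    using cube_avg_odd_nonneg_ge_half by simp
qed

lemma odd_tail_ge_of_fourth_moment:
  assumes c: "23 / 100 \<le> c" "c \<le> 1"
    and fourth: "cube_avg F (\<lambda>S. (Z S) ^ 4) \<le> 3 * (cube_avg F (\<lambda>S. (Z S)\<^sup>2))\<^sup>2"
  shows "(1 - c)\<^sup>2 / 4 \<le> cube_avg F (\<lambda>S. of_bool (c * sqrt (cube_avg F (\<lambda>S. (Z S)\<^sup>2)) \<le> Z S))"
    (is "_ \<le> ?q")
proof -
  define v where "v = cube_avg F (\<lambda>S. (Z S)\<^sup>2)"
  have "0 \<le> v"
    unfolding v_def by (intro cube_avg_nonneg) auto
  show ?thesis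
  proof (cases "v = 0")
    case True
    then show ?thesis
      using odd_tail_ge_at_zero c unfolding v_def by simp
  next
    case False
    have "0 \<le> ?q"
      by (intro cube_avg_nonneg) auto
    have t_square: "(c * sqrt v)\<^sup>2 = c\<^sup>2 * v"
      using \<open>0 \<le> v\<close> by (simp add: power_mult_distrib)
    have "c\<^sup>2 * v \<le> v"
      using c \<open>0 \<le> v\<close> by (intro mult_left_le_one_le) (auto simp: power_le_one)
    have "(1 - c\<^sup>2)\<^sup>2 * v\<^sup>2 = (v - c\<^sup>2 * v)\<^sup>2"
      by (simp add: power2_eq_square algebra_simps)
    also have "\<dots> \<le> 2 * cube_avg F (\<lambda>S. (Z S) ^ 4) * ?q"
      using odd_Paley_Zygmund[of "c * sqrt v"] c \<open>0 \<le> v\<close> \<open>c\<^sup>2 * v \<le> v\<close> t_square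
      unfolding v_def by simp
    also have "\<dots> \<le> (6 * ?q) * v\<^sup>2"
      using mult_right_mono[OF fourth \<open>0 \<le> ?q\<close>] unfolding v_def by simp
    finally have "(1 - c\<^sup>2)\<^sup>2 * v\<^sup>2 \<le> (6 * ?q) * v\<^sup>2" .
    then have "(1 - c\<^sup>2)\<^sup>2 \<le> 6 * ?q"
      using False \<open>0 \<le> v\<close> by simp
    then show ?thesis
      using one_minus_square_quarter_le_sixth[OF c] by simp
  qed
qed

lemma odd_tail_ge_of_first_moment:
  assumes c: "0 \<le> c" "c \<le> 23 / 100"
    and first: "cube_avg F (\<lambda>S. (Z S)\<^sup>2) \<le> 2 * (cube_avg F (\<lambda>S. \<bar>Z S\<bar>))\<^sup>2"
  shows "(1 - c)\<^sup>2 / 4 \<le> cube_avg F (\<lambda>S. of_bool (c * sqrt (cube_avg F (\<lambda>S. (Z S)\<^sup>2)) \<le> Z S))"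
    (is "_ \<le> ?q")
proof -
  define v where "v = cube_avg F (\<lambda>S. (Z S)\<^sup>2)"
  define e where "e = cube_avg F (\<lambda>S. \<bar>Z S\<bar>)"
  define w where "w = sqrt (2 * ?q)"
  have "0 \<le> v" "0 \<le> e" "0 \<le> ?q"
    unfolding v_def e_def by (auto intro!: cube_avg_nonneg)
  show ?thesis
  proof (cases "c * sqrt v = 0")
    case True
    show ?thesis
      using odd_tail_ge_at_zero c unfolding True[unfolded v_def] by simp
  next
    case False
    then have "0 < c" "0 < sqrt v"
      using c \<open>0 \<le> v\<close> by auto
    have "sqrt v * (sqrt 2 / 2) \<le> e * sqrt 2 * (sqrt 2 / 2)"
      using real_sqrt_le_mono[OF first[folded v_def e_def]] \<open>0 \<le> e\<close>
      by (intro mult_right_mono) (simp_all add: real_sqrt_mult mult.commute)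
    also have "\<dots> = e"
      by simp
    also have "e \<le> sqrt (2 * v * ?q) + c * sqrt v * (1 - 2 * ?q)"
      using odd_mean_abs_le_tail[of "c * sqrt v"] \<open>0 < c\<close> \<open>0 < sqrt v\<close>
      unfolding e_def v_def by simp
    also have "\<dots> = sqrt v * (w + c * (1 - w\<^sup>2))"
      using \<open>0 \<le> ?q\<close> unfolding w_def by (simp add: real_sqrt_mult algebra_simps)
    finally have "sqrt 2 / 2 \<le> w + c * (1 - w\<^sup>2)"
      using \<open>0 < sqrt v\<close> by simp
    moreover have "0 \<le> w"
      unfolding w_def using \<open>0 \<le> ?q\<close> by simp
    ultimately have "(1 - c) * sqrt 2 / 2 \<le> w"
      using quadratic_threshold_small_slope \<open>0 < c\<close> c(2) by blast
    then have "((1 - c) * sqrt 2 / 2)\<^sup>2 \<le> w\<^sup>2"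
      using c by (intro power_mono) auto
    then show ?thesis
      using \<open>0 \<le> ?q\<close> unfolding w_def v_def by (simp add: power_mult_distrib power_divide)
  qed
qed

end

theorem rademacher_sum_tail_ge:
  assumes "finite F" "0 \<le> c" "c \<le> 1"
  shows "(1 - c)\<^sup>2 / 4
    \<le> cube_avg F (\<lambda>S. of_bool (c * sqrt (\<Sum>j\<in>F. (b j)\<^sup>2) \<le> rademacher_sum b F S))"
proof -
  have odd: "\<And>S. S \<subseteq> F \<Longrightarrow> rademacher_sum b F (F - S) = - rademacher_sum b F S"
    by (rule rademacher_sum_compl)
  note second = cube_avg_rademacher_sum_square[OF assms(1), of b]
  show ?thesis
  proof (cases "23 / 100 \<le> c")
    case True
    then show ?thesis
      using odd_tail_ge_of_fourth_moment[where Z = "rademacher_sum b F", OF assms(1) odd True assms(3)]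
        cube_avg_rademacher_sum_fourth[OF assms(1), of b]
      unfolding second by simp
  next
    case False
    then show ?thesis
      using odd_tail_ge_of_first_moment[where Z = "rademacher_sum b F", OF assms(1) odd assms(2)]
        Szarek_inequality[OF assms(1), of b]
      unfolding second by simp
  qed
qed

section \<open>Fair Bernoulli variables\<close>

lemma sum_Bernoulli_eq_rademacher_sum:
  assumes "\<And>i. i \<in> F \<Longrightarrow> y i \<in> {0, 1}"
  shows "(\<Sum>i\<in>F. a i * y i) = (\<Sum>i\<in>F. a i) / 2 + rademacher_sum (\<lambda>i. a i / 2) F {i \<in> F. y i = 1}"
proof -
  have "(\<Sum>i\<in>F. a i * y i) = (\<Sum>i\<in>F. a i / 2 + a i / 2 * walsh i {i \<in> F. y i = 1})"
    using assms by (intro sum.cong) (auto simp: walsh_def)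
  then show ?thesis
    unfolding rademacher_sum_def by (simp add: sum.distrib sum_divide_distrib)
qed

context prob_space
begin

context
  fixes F :: "nat set" and Y :: "nat \<Rightarrow> 'a \<Rightarrow> real"
  assumes F: "finite F"
    and indep: "indep_vars (\<lambda>_. borel) Y F"
    and Bernoulli: "\<And>i \<omega>. i \<in> F \<Longrightarrow> \<omega> \<in> space M \<Longrightarrow> Y i \<omega> \<in> {0, 1}"
    and fair: "\<And>i. i \<in> F \<Longrightarrow> prob {\<omega> \<in> space M. Y i \<omega> = 1} = 1 / 2"
begin

lemma prob_Bernoulli_eq:
  assumes "i \<in> F"
  shows "prob (Y i -` {of_bool P} \<inter> space M) = 1 / 2"
proof (cases P)
  case True
  then show ?thesis
    using fair[OF assms] by (simp add: Int_def conj_commute)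
next
  case False
  have "Y i \<in> borel_measurable M"
    using indep assms unfolding indep_vars_def2 by auto
  then have "{\<omega> \<in> space M. Y i \<omega> = 1} \<in> events"
    by measurable
  moreover have "Y i -` {of_bool P} \<inter> space M = space M - {\<omega> \<in> space M. Y i \<omega> = 1}"
    using False Bernoulli[OF assms] by auto
  ultimately show ?thesis
    using prob_compl fair[OF assms] by simp
qed

lemma prob_ones_eq:
  assumes "S \<subseteq> F"
  shows "{\<omega> \<in> space M. {i \<in> F. Y i \<omega> = 1} = S} \<in> events"
    and "prob {\<omega> \<in> space M. {i \<in> F. Y i \<omega> = 1} = S} = 1 / 2 ^ card F"
proof -
  have "{\<omega> \<in> space M. {i \<in> F. Y i \<omega> = 1} = S} \<in> events
      \<and> prob {\<omega> \<in> space M. {i \<in> F. Y i \<omega> = 1} = S} = 1 / 2 ^ card F"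
  proof (cases "F = {}")
    case True
    then show ?thesis
      using assms by (simp add: prob_space)
  next
    case False
    have eq: "{\<omega> \<in> space M. {i \<in> F. Y i \<omega> = 1} = S} = (\<Inter>i\<in>F. Y i -` {of_bool (i \<in> S)} \<inter> space M)"
    proof -
      have "({i \<in> F. Y i \<omega> = 1} = S) \<longleftrightarrow> (\<forall>i\<in>F. Y i \<omega> = of_bool (i \<in> S))"
        if "\<omega> \<in> space M" for \<omega>
        using assms Bernoulli[OF _ that] by (auto split: if_splits)
      then show ?thesis
        using False by auto
    qed
    have events: "Y i -` {of_bool (i \<in> S)} \<inter> space M \<in> events" if "i \<in> F" for i
      using indep that unfolding indep_vars_def2 by (intro measurable_sets[of _ _ borel]) auto
    have "prob (\<Inter>i\<in>F. Y i -` {of_bool (i \<in> S)} \<inter> space M)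
        = (\<Prod>i\<in>F. prob (Y i -` {of_bool (i \<in> S)} \<inter> space M))"
      by (rule indep_varsD[OF indep False F order_refl]) auto
    also have "\<dots> = 1 / 2 ^ card F"
      using prob_Bernoulli_eq by (simp add: prod.cong[OF refl, of F _ "\<lambda>_. 1 / 2"] power_one_over)
    finally have "prob (\<Inter>i\<in>F. Y i -` {of_bool (i \<in> S)} \<inter> space M) = 1 / 2 ^ card F" .
    moreover have "(\<Inter>i\<in>F. Y i -` {of_bool (i \<in> S)} \<inter> space M) \<in> events"
      using events F False by (intro sets.finite_INT) auto
    ultimately show ?thesis
      unfolding eq by blast
  qed
  then show "{\<omega> \<in> space M. {i \<in> F. Y i \<omega> = 1} = S} \<in> events"
    and "prob {\<omega> \<in> space M. {i \<in> F. Y i \<omega> = 1} = S} = 1 / 2 ^ card F"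
    by auto
qed

lemma expectation_fun_ones: "expectation (\<lambda>\<omega>. g {i \<in> F. Y i \<omega> = 1}) = cube_avg F g"
proof -
  define A where "A S = {\<omega> \<in> space M. {i \<in> F. Y i \<omega> = 1} = S}" for S
  have "expectation (\<lambda>\<omega>. g {i \<in> F. Y i \<omega> = 1}) = expectation (\<lambda>\<omega>. \<Sum>S\<in>Pow F. g S * indicator (A S) \<omega>)"
  proof (intro Bochner_Integration.integral_cong refl)
    fix \<omega> assume "\<omega> \<in> space M"
    then have "(\<Sum>S\<in>Pow F. g S * indicator (A S) \<omega>) = (\<Sum>S\<in>Pow F. if S = {i \<in> F. Y i \<omega> = 1} then g S else 0)"
      by (intro sum.cong) (auto simp: A_def)
    then show "g {i \<in> F. Y i \<omega> = 1} = (\<Sum>S\<in>Pow F. g S * indicator (A S) \<omega>)"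
      using F by (simp add: sum.delta')
  qed
  also have "\<dots> = (\<Sum>S\<in>Pow F. g S * prob (A S))"
    using prob_ones_eq(1) unfolding A_def
    by (subst Bochner_Integration.integral_sum) (auto simp: integrable_indicator_iff less_top[symmetric])
  also have "\<dots> = cube_avg F g"
    using prob_ones_eq(2) unfolding A_def cube_avg_def by (simp add: sum_divide_distrib)
  finally show ?thesis .
qed

lemma Bernoulli_sum_eq:
  "\<omega> \<in> space M \<Longrightarrow> (\<Sum>i\<in>F. a i * Y i \<omega>)
    = (\<Sum>i\<in>F. a i) / 2 + rademacher_sum (\<lambda>i. a i / 2) F {i \<in> F. Y i \<omega> = 1}"
  by (rule sum_Bernoulli_eq_rademacher_sum) (rule Bernoulli)

lemma expectation_Bernoulli_sum: "expectation (\<lambda>\<omega>. \<Sum>i\<in>F. a i * Y i \<omega>) = (\<Sum>i\<in>F. a i) / 2"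
proof -
  have "expectation (\<lambda>\<omega>. \<Sum>i\<in>F. a i * Y i \<omega>)
      = expectation (\<lambda>\<omega>. (\<Sum>i\<in>F. a i) / 2 + rademacher_sum (\<lambda>i. a i / 2) F {i \<in> F. Y i \<omega> = 1})"
    by (rule Bochner_Integration.integral_cong) (simp_all add: Bernoulli_sum_eq)
  also have "\<dots> = (\<Sum>i\<in>F. a i) / 2"
    using cube_avg_odd_eq_0[where Z = "rademacher_sum (\<lambda>i. a i / 2) F", OF F rademacher_sum_compl]
      expectation_fun_ones[of "\<lambda>S. (\<Sum>i\<in>F. a i) / 2 + rademacher_sum (\<lambda>i. a i / 2) F S"]
    by (simp add: cube_avg_add cube_avg_const[OF F])
  finally show ?thesis .
qed

lemma variance_Bernoulli_sum: "variance (\<lambda>\<omega>. \<Sum>i\<in>F. a i * Y i \<omega>) = (\<Sum>i\<in>F. (a i / 2)\<^sup>2)"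
proof -
  have "variance (\<lambda>\<omega>. \<Sum>i\<in>F. a i * Y i \<omega>)
      = expectation (\<lambda>\<omega>. (rademacher_sum (\<lambda>i. a i / 2) F {i \<in> F. Y i \<omega> = 1})\<^sup>2)"
    unfolding expectation_Bernoulli_sum
    by (rule Bochner_Integration.integral_cong) (simp_all add: Bernoulli_sum_eq)
  also have "\<dots> = (\<Sum>i\<in>F. (a i / 2)\<^sup>2)"
    using expectation_fun_ones[of "\<lambda>S. (rademacher_sum (\<lambda>i. a i / 2) F S)\<^sup>2"]
    by (simp add: cube_avg_rademacher_sum_square[OF F])
  finally show ?thesis .
qed

lemma prob_Bernoulli_sum_ge:
  "prob {\<omega> \<in> space M. (\<Sum>i\<in>F. a i) / 2 + t \<le> (\<Sum>i\<in>F. a i * Y i \<omega>)}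
    = cube_avg F (\<lambda>S. of_bool (t \<le> rademacher_sum (\<lambda>i. a i / 2) F S))"
proof -
  have "prob {\<omega> \<in> space M. (\<Sum>i\<in>F. a i) / 2 + t \<le> (\<Sum>i\<in>F. a i * Y i \<omega>)}
      = expectation (indicator {\<omega> \<in> space M. (\<Sum>i\<in>F. a i) / 2 + t \<le> (\<Sum>i\<in>F. a i * Y i \<omega>)})"
    by (simp add: Int_absorb2)
  also have "\<dots> = expectation (\<lambda>\<omega>. of_bool (t \<le> rademacher_sum (\<lambda>i. a i / 2) F {i \<in> F. Y i \<omega> = 1}))"
    by (rule Bochner_Integration.integral_cong) (simp_all add: indicator_def Bernoulli_sum_eq)
  also have "\<dots> = cube_avg F (\<lambda>S. of_bool (t \<le> rademacher_sum (\<lambda>i. a i / 2) F S))"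
    by (rule expectation_fun_ones)
  finally show ?thesis .
qed

end

end

theorem claim8p4:
  fixes M :: "'s measure" and Y :: "nat \<Rightarrow> 's \<Rightarrow> real"
    and a :: "nat \<Rightarrow> real" and k :: nat and c :: real
  assumes "prob_space M"
    and "prob_space.indep_vars M (\<lambda>_. borel) Y {1..k}"
    and "\<And>i \<omega>. i \<in> {1..k} \<Longrightarrow> \<omega> \<in> space M \<Longrightarrow> Y i \<omega> \<in> {0, 1}"
    and "\<And>i. i \<in> {1..k} \<Longrightarrow> measure M {\<omega> \<in> space M. Y i \<omega> = 1} = 1 / 2"
    and "\<And>i. i \<in> {1..k} \<Longrightarrow> a i \<ge> 0"
    and "0 \<le> c" and "c \<le> 1"
  defines "X \<equiv> (\<lambda>\<omega>. \<Sum>i\<in>{1..k}. a i * Y i \<omega>)"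
  defines "\<mu> \<equiv> prob_space.expectation M X"
  defines "\<sigma> \<equiv> sqrt (prob_space.variance M X)"
  shows "measure M {\<omega> \<in> space M. X \<omega> \<ge> \<mu> + c * \<sigma>} \<ge> (1 - c)\<^sup>2 / 4"
proof -
  interpret prob_space M by fact
  note Bernoulli = finite_atLeastAtMost assms(2-4)
  have \<mu>: "\<mu> = (\<Sum>i=1..k. a i) / 2"
    unfolding \<mu>_def X_def by (rule expectation_Bernoulli_sum[OF Bernoulli])
  have \<sigma>: "\<sigma> = sqrt (\<Sum>i=1..k. (a i / 2)\<^sup>2)"
    unfolding \<sigma>_def X_def using variance_Bernoulli_sum[OF Bernoulli] by simp
  have "measure M {\<omega> \<in> space M. X \<omega> \<ge> \<mu> + c * \<sigma>}
      = cube_avg {1..k} (\<lambda>S. of_bool (c * \<sigma> \<le> rademacher_sum (\<lambda>i. a i / 2) {1..k} S))"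
    unfolding X_def \<mu> by (rule prob_Bernoulli_sum_ge[OF Bernoulli])
  then show ?thesis
    unfolding \<sigma> using rademacher_sum_tail_ge[OF finite_atLeastAtMost assms(6,7)] by simp
qed

end
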